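(* Let $\theta$ be a renormalised labelled tree (as defined below) such that $\Psi_{n_\ell}(\omega\cdot\nu_\ell)\neq0$ for every line $\ell$ of $\theta$ with $n_\ell\ge0$ (this holds in particular whenever the value of $\theta$ is non-zero). Then for every $n\ge0$, $$\mathfrak{N}_n(\theta)\le 2^{-(m_n-2)}K(\theta),$$ where $\mathfrak{N}_n(\theta)$ is the number of lines of $\theta$ with scale $\ge n$ and $K(\theta):=\sum_{v}|\nu_v|$, the sum running over all nodes of $\theta$.
   Context: Notation: $\omega\in\mathbb{R}^d$ satisfies the Bryuno condition; $\alpha_m(\omega):=\inf_{0<|\nu|\le2^m}|\omega\cdot\nu|$ with $|\nu|$ the $\ell^1$ norm; $m_0=0$, $m_{n+1}=m_n+p_n+1$ with $p_n:=\max\{q\ge0:\alpha_{m_n}(\omega)<2\alpha_{m_n+q}(\omega)\}$. $\chi$ is an even $C^\infty$ function, non-increasing in $|x|$, equal to $1$ for $|x|\le1/2$ and $0$ for $|x|\ge1$; $\chi_{-1}\equiv1$, $\chi_n(x)=\chi(4x/\alpha_{m_n}(\omega))$, $\psi_n=1-\chi_n$ ($n\ge0$), $\Psi_n=\chi_{n-1}\psi_n$ ($n\ge0$); thus $\Psi_n(x)\neq0$ implies $\alpha_{m_n}(\omega)/8<|x|<\alpha_{m_{n-1}}(\omega)/4$ (with $\alpha_{m_{-1}}:=+\infty$). Trees: a tree $\theta$ is a finite rooted tree whose root has exactly one incident line (the root line); all other vertices are nodes; lines are oriented toward the root, and each line $\ell=\ell_v$ is identified with the node $v$ it leaves. Write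 $w\preceq v$ if $v$ lies on the path from $w$ to the root. Each node $v$ carries a mode $\nu_v\in\mathbb{Z}^d$; each line $\ell_v$ carries the momentum $\nu_{\ell_v}=\sum_{w\preceq v}\nu_w$, required to be nonzero for all lines except possibly the root line; each line carries a scale $n_\ell$, with $n_\ell=-1$ if $\nu_\ell=0$ and $n_\ell\in\{0,1,2,\dots\}$ otherwise. A cluster on scale $n$ is a maximal connected subgraph (set of nodes together with the lines of $\theta$ joining them) all of whose lines have scale $\le n$ and at least one line of which has scale $n$; a line enters (exits) a subgraph $T$ if it connects a node outside $T$ to a node in $T$ (a node in $T$ to a node outside). A self-energy cluster is either a cluster with exactly one entering line $\ell'$ and one exiting line $\ell$ satisfying $\nu_\ell=\nu_{\ell'}$, or (scale $-1$) a single node $v$ with $\nu_v=0$ having exactly one entering line. A tree is renormalised if it contains no self-energy clusters. *)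

theory Defs
  imports "HOL-Analysis.Analysis"
begin

text \<open>Vectors in R^d / Z^d are functions on a finite index type 'd (d = CARD('d)).\<close>

definition dotp :: "('d::finite \<Rightarrow> real) \<Rightarrow> ('d \<Rightarrow> int) \<Rightarrow> real" where
  "dotp \<omega> \<nu> = (\<Sum>i\<in>UNIV. \<omega> i * of_int (\<nu> i))"

definition norm1 :: "('d::finite \<Rightarrow> int) \<Rightarrow> int" where
  "norm1 \<nu> = (\<Sum>i\<in>UNIV. \<bar>\<nu> i\<bar>)"

definition alpha :: "('d::finite \<Rightarrow> real) \<Rightarrow> nat \<Rightarrow> real" where
  "alpha \<omega> m = Inf {\<bar>dotp \<omega> \<nu>\<bar> | \<nu>. \<nu> \<noteq> (\<lambda>_. 0) \<and> norm1 \<nu> \<le> 2 ^ m}"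

definition bryuno :: "('d::finite \<Rightarrow> real) \<Rightarrow> bool" where
  "bryuno \<omega> \<longleftrightarrow> (\<forall>m. alpha \<omega> m > 0) \<and>
     summable (\<lambda>m. (1/2) ^ m * ln (1 / alpha \<omega> m))"

definition pexp :: "('d::finite \<Rightarrow> real) \<Rightarrow> nat \<Rightarrow> nat" where
  "pexp \<omega> k = Max {q. alpha \<omega> k < 2 * alpha \<omega> (k + q)}"

fun mseq :: "('d::finite \<Rightarrow> real) \<Rightarrow> nat \<Rightarrow> nat" where
  "mseq \<omega> 0 = 0"
| "mseq \<omega> (Suc n) = mseq \<omega> n + pexp \<omega> (mseq \<omega> n) + 1"

definition cutoff :: "(real \<Rightarrow> real) \<Rightarrow> bool" where
  "cutoff chi \<longleftrightarrow> (\<forall>x. chi (- x) = chi x)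
     \<and> (\<forall>k x. (deriv ^^ k) chi differentiable (at x))
     \<and> (\<forall>x y. \<bar>x\<bar> \<le> \<bar>y\<bar> \<longrightarrow> chi y \<le> chi x)
     \<and> (\<forall>x. \<bar>x\<bar> \<le> 1/2 \<longrightarrow> chi x = 1)
     \<and> (\<forall>x. \<bar>x\<bar> \<ge> 1 \<longrightarrow> chi x = 0)"

text \<open>chi_n for n \<ge> 0 (chi_{-1} = 1 is handled in Psi), psi_n = 1 - chi_n, Psi_n = chi_{n-1} psi_n.\<close>
definition chin :: "(real \<Rightarrow> real) \<Rightarrow> ('d::finite \<Rightarrow> real) \<Rightarrow> nat \<Rightarrow> real \<Rightarrow> real" where
  "chin chi \<omega> n x = chi (4 * x / alpha \<omega> (mseq \<omega> n))"

definition Psi :: "(real \<Rightarrow> real) \<Rightarrow> ('d::finite \<Rightarrow> real) \<Rightarrow> nat \<Rightarrow> real \<Rightarrow> real" where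
  "Psi chi \<omega> n x = (if n = 0 then 1 else chin chi \<omega> (n - 1) x) * (1 - chin chi \<omega> n x)"

text \<open>A tree is given by its finite set of nodes V and a parent map par:
  par v = Some w means the line l_v goes from v to the node w; par v = None means
  l_v is the root line. Lines are identified with the nodes they leave.\<close>

definition parrel :: "'v set \<Rightarrow> ('v \<Rightarrow> 'v option) \<Rightarrow> ('v \<times> 'v) set" where
  "parrel V par = {(v, w). v \<in> V \<and> par v = Some w}"

definition is_tree :: "'v set \<Rightarrow> ('v \<Rightarrow> 'v option) \<Rightarrow> bool" where
  "is_tree V par \<longleftrightarrow> finite V
     \<and> (\<forall>v\<in>V. \<forall>w. par v = Some w \<longrightarrow> w \<in> V)
     \<and> (\<exists>!v. v \<in> V \<and> par v = None)
     \<and> acyclic (parrel V par)"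

definition preceq :: "'v set \<Rightarrow> ('v \<Rightarrow> 'v option) \<Rightarrow> 'v \<Rightarrow> 'v \<Rightarrow> bool" where
  "preceq V par w v \<longleftrightarrow> w \<in> V \<and> (w, v) \<in> (parrel V par)\<^sup>*"

definition mom :: "'v set \<Rightarrow> ('v \<Rightarrow> 'v option) \<Rightarrow> ('v \<Rightarrow> 'd \<Rightarrow> int) \<Rightarrow> 'v \<Rightarrow> 'd \<Rightarrow> int" where
  "mom V par nu v = (\<lambda>i. \<Sum>w\<in>{w. preceq V par w v}. nu w i)"

definition labelled_tree :: "'v set \<Rightarrow> ('v \<Rightarrow> 'v option) \<Rightarrow> ('v \<Rightarrow> 'd \<Rightarrow> int) \<Rightarrow> ('v \<Rightarrow> int) \<Rightarrow> bool" where
  "labelled_tree V par nu sc \<longleftrightarrow> is_tree V par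
     \<and> (\<forall>v\<in>V. par v \<noteq> None \<longrightarrow> mom V par nu v \<noteq> (\<lambda>_. 0))
     \<and> (\<forall>v\<in>V. (mom V par nu v = (\<lambda>_. 0) \<longrightarrow> sc v = -1) \<and> (mom V par nu v \<noteq> (\<lambda>_. 0) \<longrightarrow> sc v \<ge> 0))"

definition low_lines :: "'v set \<Rightarrow> ('v \<Rightarrow> 'v option) \<Rightarrow> ('v \<Rightarrow> int) \<Rightarrow> int \<Rightarrow> ('v \<times> 'v) set" where
  "low_lines V par sc n = {(v, w). (v, w) \<in> parrel V par \<and> sc v \<le> n}"

definition component :: "'v set \<Rightarrow> ('v \<Rightarrow> 'v option) \<Rightarrow> ('v \<Rightarrow> int) \<Rightarrow> int \<Rightarrow> 'v \<Rightarrow> 'v set" where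
  "component V par sc n v =
     {w. (v, w) \<in> (low_lines V par sc n \<union> (low_lines V par sc n)\<inverse>)\<^sup>*}"

definition is_cluster :: "'v set \<Rightarrow> ('v \<Rightarrow> 'v option) \<Rightarrow> ('v \<Rightarrow> int) \<Rightarrow> int \<Rightarrow> 'v set \<Rightarrow> bool" where
  "is_cluster V par sc n T \<longleftrightarrow> (\<exists>v\<in>V. T = component V par sc n v)
     \<and> (\<exists>v\<in>T. \<exists>w\<in>T. par v = Some w \<and> sc v = n)"

definition entering :: "'v set \<Rightarrow> ('v \<Rightarrow> 'v option) \<Rightarrow> 'v set \<Rightarrow> 'v set" where
  "entering V par T = {w\<in>V. w \<notin> T \<and> (\<exists>u\<in>T. par w = Some u)}"

definition exiting :: "'v set \<Rightarrow> ('v \<Rightarrow> 'v option) \<Rightarrow> 'v set \<Rightarrow> 'v set" where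
  "exiting V par T = {w\<in>T. \<exists>u\<in>V. u \<notin> T \<and> par w = Some u}"

definition self_energy :: "'v set \<Rightarrow> ('v \<Rightarrow> 'v option) \<Rightarrow> ('v \<Rightarrow> 'd \<Rightarrow> int) \<Rightarrow> ('v \<Rightarrow> int) \<Rightarrow> 'v set \<Rightarrow> bool" where
  "self_energy V par nu sc T \<longleftrightarrow>
     (\<exists>n l l'. is_cluster V par sc n T \<and> entering V par T = {l'} \<and> exiting V par T = {l}
        \<and> mom V par nu l = mom V par nu l')
   \<or> (\<exists>v\<in>V. T = {v} \<and> nu v = (\<lambda>_. 0) \<and> card (entering V par T) = 1)"

definition renormalised :: "'v set \<Rightarrow> ('v \<Rightarrow> 'v option) \<Rightarrow> ('v \<Rightarrow> 'd \<Rightarrow> int) \<Rightarrow> ('v \<Rightarrow> int) \<Rightarrow> bool" where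
  "renormalised V par nu sc \<longleftrightarrow> \<not> (\<exists>T. self_energy V par nu sc T)"

definition Nlines :: "'v set \<Rightarrow> ('v \<Rightarrow> int) \<Rightarrow> nat \<Rightarrow> nat" where
  "Nlines V sc n = card {v\<in>V. sc v \<ge> int n}"

definition Kmodes :: "'v set \<Rightarrow> ('v \<Rightarrow> 'd::finite \<Rightarrow> int) \<Rightarrow> int" where
  "Kmodes V nu = (\<Sum>v\<in>V. norm1 (nu v))"

end

theory Submission
  imports Defs
begin

text \<open>
  The proof separates arithmetic from combinatorics.  Arithmetic: the support of Psi_k together
  with the defining property of p_n (alpha_{m_n} < 2 alpha_{m_n + p_n}, which needs the set of
  admissible q to be finite; this follows from Dirichlet approximation since d >= 2) shows that
  every line of scale at least n >= 1 has |omega . nu| < alpha_{m_n - 1} / 2.  Hence the momenta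
  of such lines, and the differences of two distinct ones, have l1 norm larger than
  E = 2^(m_n - 1) (for n = 0 simply larger than E = 1/2).

  Combinatorics (locale separated_tree): in a renormalised tree in which the momenta of all lines
  of scale >= k and all differences of distinct such momenta have norm > E, one has
  E * N_k <= 2 K.  This is proved by induction over subtrees with the stronger invariant
  E * N <= 2 K - E for non-empty subtrees hanging from a non-root line.  The only delicate case
  is a high line with a single high line below it: the nodes between them form a self-energy
  cluster unless the two momenta differ, so renormalisation provides the missing weight E.
\<close>

section \<open>Diophantine preliminaries\<close>

lemma norm1_nonneg: "0 \<le> norm1 \<nu>"
  unfolding norm1_def by (simp add: sum_nonneg)

lemma norm1_pos:
  assumes "\<nu> \<noteq> (\<lambda>_. 0)"
  shows "1 \<le> norm1 \<nu>"
proof -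
  obtain i where "\<nu> i \<noteq> 0" using assms by auto
  then have "1 \<le> \<bar>\<nu> i\<bar>" by simp
  also have "\<dots> \<le> norm1 \<nu>" unfolding norm1_def by (rule member_le_sum) auto
  finally show ?thesis .
qed

lemma norm1_sum_le:
  assumes "finite S"
  shows "real_of_int (norm1 (\<lambda>i. \<Sum>w\<in>S. \<nu> w i)) \<le> (\<Sum>w\<in>S. real_of_int (norm1 (\<nu> w)))"
proof -
  have "norm1 (\<lambda>i. \<Sum>w\<in>S. \<nu> w i) \<le> (\<Sum>i\<in>UNIV. \<Sum>w\<in>S. \<bar>\<nu> w i\<bar>)"
    unfolding norm1_def by (intro sum_mono sum_abs)
  also have "\<dots> = (\<Sum>w\<in>S. norm1 (\<nu> w))" unfolding norm1_def by (rule sum.swap)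
  finally show ?thesis by (metis of_int_le_iff of_int_sum)
qed

lemma dotp_diff: "dotp \<omega> (\<lambda>i. a i - b i) = dotp \<omega> a - dotp \<omega> b"
  unfolding dotp_def by (simp add: algebra_simps sum_subtractf)

lemma dotp_unit: "dotp \<omega> (\<lambda>l. if l = j then 1 else 0) = \<omega> j"
  unfolding dotp_def by (simp add: if_distrib cong: if_cong)

lemma alpha_lower:
  assumes "\<nu> \<noteq> (\<lambda>_. 0)" "norm1 \<nu> \<le> 2 ^ m"
  shows "alpha \<omega> m \<le> \<bar>dotp \<omega> \<nu>\<bar>"
  unfolding alpha_def by (rule cInf_lower) (use assms in \<open>auto intro: bdd_belowI[of _ 0]\<close>)

lemma alpha_antimono:
  fixes \<omega> :: "'d::finite \<Rightarrow> real"
  assumes "m \<le> m'"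
  shows "alpha \<omega> m' \<le> alpha \<omega> m"
  unfolding alpha_def
proof (rule cInf_superset_mono)
  obtain j :: 'd where True by blast
  have "(\<lambda>l. if l = j then (1::int) else 0) \<noteq> (\<lambda>_. 0)" by (metis one_neq_zero)
  moreover have "norm1 (\<lambda>l. if l = j then (1::int) else 0) \<le> 2 ^ m"
    unfolding norm1_def by (simp add: if_distrib cong: if_cong)
  ultimately show "{\<bar>dotp \<omega> \<nu>\<bar> | \<nu>. \<nu> \<noteq> (\<lambda>_. 0) \<and> norm1 \<nu> \<le> 2 ^ m} \<noteq> {}" by blast
  show "bdd_below {\<bar>dotp \<omega> \<nu>\<bar> | \<nu>. \<nu> \<noteq> (\<lambda>_. 0) \<and> norm1 \<nu> \<le> 2 ^ m'}"
    by (auto intro: bdd_belowI[of _ 0])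
  have "(2::int) ^ m \<le> 2 ^ m'" using assms by (simp add: power_increasing)
  then show "{\<bar>dotp \<omega> \<nu>\<bar> | \<nu>. \<nu> \<noteq> (\<lambda>_. 0) \<and> norm1 \<nu> \<le> 2 ^ m}
      \<subseteq> {\<bar>dotp \<omega> \<nu>\<bar> | \<nu>. \<nu> \<noteq> (\<lambda>_. 0) \<and> norm1 \<nu> \<le> 2 ^ m'}"
    by (blast intro: order_trans)
qed

lemma norm1_gt_if_small_divisor:
  assumes "\<nu> \<noteq> (\<lambda>_. 0)" "\<bar>dotp \<omega> \<nu>\<bar> < alpha \<omega> m"
  shows "2 ^ m < norm1 \<nu>"
  using alpha_lower[OF assms(1), of m \<omega>] assms(2) by linarith

text \<open>In dimension d >= 2 arbitrarily small divisors occur: by Dirichlet approximation of the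
  ratio of two frequencies (or trivially, if one frequency vanishes).\<close>
lemma small_divisor_exists:
  fixes \<omega> :: "'d::finite \<Rightarrow> real"
  assumes "CARD('d) \<ge> 2" "c > 0"
  obtains \<nu> where "\<nu> \<noteq> (\<lambda>_. 0)" "\<bar>dotp \<omega> \<nu>\<bar> < c"
proof -
  obtain i j :: 'd where "i \<noteq> j"
    using assms(1) by (metis card_le_Suc_iff numeral_2_eq_2 ex_in_conv insert_iff)
  show ?thesis
  proof (cases "\<omega> j = 0")
    case True
    have "(\<lambda>l. if l = j then (1::int) else 0) \<noteq> (\<lambda>_. 0)" by (metis one_neq_zero)
    then show ?thesis using that[of "\<lambda>l. if l = j then 1 else 0"] True assms(2)
      by (simp add: dotp_unit)
  next
    case False
    define N where "N = nat \<lceil>\<bar>\<omega> j\<bar> / c\<rceil> + 1"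
    have "N > 0" unfolding N_def by simp
    then obtain h q where hq: "0 < q" "\<bar>of_int q * (\<omega> i / \<omega> j) - of_int h\<bar> < 1 / N"
      using Dirichlet_approx by metis
    define \<nu> where "\<nu> = (\<lambda>l. if l = i then q else if l = j then - h else 0)"
    have "\<nu> \<noteq> (\<lambda>_. 0)" using hq(1) unfolding \<nu>_def by (metis less_irrefl)
    have "dotp \<omega> \<nu> = (\<Sum>l\<in>UNIV. (if l = i then \<omega> i * q else 0) + (if l = j then - (\<omega> j * h) else 0))"
      unfolding dotp_def \<nu>_def using \<open>i \<noteq> j\<close> by (intro sum.cong) auto
    also have "\<dots> = \<omega> j * (of_int q * (\<omega> i / \<omega> j) - of_int h)"
      using False by (simp add: sum.distrib field_simps)
    finally have "\<bar>dotp \<omega> \<nu>\<bar> = \<bar>\<omega> j\<bar> * \<bar>of_int q * (\<omega> i / \<omega> j) - of_int h\<bar>"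
      by (simp add: abs_mult)
    also have "\<dots> \<le> \<bar>\<omega> j\<bar> / N" using hq(2) by (simp add: mult_left_mono divide_inverse)
    also have "\<dots> < c"
    proof -
      have "\<bar>\<omega> j\<bar> / c < N" unfolding N_def by linarith
      then show ?thesis using \<open>N > 0\<close> assms(2) by (simp add: field_simps)
    qed
    finally show ?thesis using that \<open>\<nu> \<noteq> (\<lambda>_. 0)\<close> by blast
  qed
qed

lemma alpha_eventually_below:
  fixes \<omega> :: "'d::finite \<Rightarrow> real"
  assumes "CARD('d) \<ge> 2" "c > 0"
  obtains m where "alpha \<omega> m < c"
proof -
  obtain \<nu> where \<nu>: "\<nu> \<noteq> (\<lambda>_. 0)" "\<bar>dotp \<omega> \<nu>\<bar> < c"
    using small_divisor_exists[OF assms] by blast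
  have "nat (norm1 \<nu>) < 2 ^ nat (norm1 \<nu>)" by (rule less_exp)
  then have "int (nat (norm1 \<nu>)) \<le> int (2 ^ nat (norm1 \<nu>))" by linarith
  then have "norm1 \<nu> \<le> 2 ^ nat (norm1 \<nu>)" using norm1_nonneg[of \<nu>] by simp
  then have "alpha \<omega> (nat (norm1 \<nu>)) \<le> \<bar>dotp \<omega> \<nu>\<bar>" by (rule alpha_lower[OF \<nu>(1)])
  then show ?thesis using \<nu>(2) that[of "nat (norm1 \<nu>)"] by linarith
qed

text \<open>The defining property of p_k: the set of q with alpha_k < 2 alpha_{k+q} is finite (since
  alpha_m tends to 0) and contains 0, so its maximum p_k belongs to it.\<close>
lemma pexp_spec:
  fixes \<omega> :: "'d::finite \<Rightarrow> real"
  assumes "CARD('d) \<ge> 2" "alpha \<omega> k > 0"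
  shows "alpha \<omega> k < 2 * alpha \<omega> (k + pexp \<omega> k)"
proof -
  define S where "S = {q. alpha \<omega> k < 2 * alpha \<omega> (k + q)}"
  obtain m where m: "alpha \<omega> m < alpha \<omega> k / 2"
    using alpha_eventually_below[OF assms(1)] assms(2) by (metis half_gt_zero)
  have "S \<subseteq> {..<m}"
  proof
    fix q assume "q \<in> S"
    then have "alpha \<omega> m < alpha \<omega> (k + q)" using m unfolding S_def by simp
    then have "\<not> m \<le> k + q" using alpha_antimono[of m "k + q" \<omega>] by linarith
    then show "q \<in> {..<m}" by simp
  qed
  then have "finite S" using finite_subset by blast
  moreover have "0 \<in> S" using assms(2) unfolding S_def by simp
  ultimately have "Max S \<in> S" by (intro Max_in) auto
  then show ?thesis unfolding S_def pexp_def by simp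
qed

lemma alpha_mseq_gap:
  fixes \<omega> :: "'d::finite \<Rightarrow> real"
  assumes "CARD('d) \<ge> 2" "bryuno \<omega>"
  shows "alpha \<omega> (mseq \<omega> n) < 2 * alpha \<omega> (mseq \<omega> (Suc n) - 1)"
proof -
  have "alpha \<omega> (mseq \<omega> n) > 0" using assms(2) unfolding bryuno_def by blast
  from pexp_spec[OF assms(1) this] show ?thesis by simp
qed

lemma mseq_mono: "a \<le> b \<Longrightarrow> mseq \<omega> a \<le> mseq \<omega> b"
  by (induction b) (auto simp: le_Suc_eq)

lemma Psi_nonzero_bound:
  assumes "cutoff chi" "alpha \<omega> (mseq \<omega> k) > 0" "Psi chi \<omega> (Suc k) x \<noteq> 0"
  shows "\<bar>x\<bar> < alpha \<omega> (mseq \<omega> k) / 4"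
proof -
  have "chi (4 * x / alpha \<omega> (mseq \<omega> k)) \<noteq> 0"
    using assms(3) unfolding Psi_def chin_def by auto
  then have "\<bar>4 * x / alpha \<omega> (mseq \<omega> k)\<bar> < 1"
    using assms(1) unfolding cutoff_def by (meson not_le)
  then show ?thesis using assms(2) by (simp add: abs_divide abs_mult field_simps)
qed

lemma small_divisor_at_scale:
  fixes \<omega> :: "'d::finite \<Rightarrow> real"
  assumes "CARD('d) \<ge> 2" "bryuno \<omega>" "cutoff chi"
    and "Suc n \<le> k" "Psi chi \<omega> k x \<noteq> 0"
  shows "\<bar>x\<bar> < alpha \<omega> (mseq \<omega> (Suc n) - 1) / 2"
proof -
  obtain k' where k: "k = Suc k'" "n \<le> k'" using assms(4) by (metis Suc_le_D Suc_le_mono)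
  have "\<bar>x\<bar> < alpha \<omega> (mseq \<omega> k') / 4"
    using Psi_nonzero_bound[OF assms(3)] assms(2,5) k(1) unfolding bryuno_def by blast
  also have "\<dots> \<le> alpha \<omega> (mseq \<omega> n) / 4"
    using alpha_antimono[OF mseq_mono[OF k(2)]] by simp
  also have "\<dots> < alpha \<omega> (mseq \<omega> (Suc n) - 1) / 2"
    using alpha_mseq_gap[OF assms(1,2), of n] by linarith
  finally show ?thesis .
qed

section \<open>Trees\<close>

locale rooted_tree =
  fixes V :: "'v set" and par :: "'v \<Rightarrow> 'v option"
  assumes tree: "is_tree V par"
begin

abbreviation R :: "('v \<times> 'v) set" where "R \<equiv> parrel V par"

lemma finite_V: "finite V"
  using tree unfolding is_tree_def by blast

lemma R_iff: "(a, b) \<in> R \<longleftrightarrow> a \<in> V \<and> par a = Some b"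
  unfolding parrel_def by simp

lemma R_in_V: "(a, b) \<in> R \<Longrightarrow> a \<in> V \<and> b \<in> V"
  using tree unfolding is_tree_def by (auto simp: R_iff)

lemma rtrancl_in_V: "(a, b) \<in> R\<^sup>* \<Longrightarrow> a \<in> V \<Longrightarrow> b \<in> V"
  by (induction rule: rtrancl_induct) (auto dest: R_in_V)

lemma acyclic_R: "acyclic R"
  using tree unfolding is_tree_def by blast

lemma not_trancl_refl: "(x, x) \<notin> R\<^sup>+"
  using acyclic_R unfolding acyclic_def by blast

lemma finite_R: "finite R"
  by (rule finite_subset[of _ "V \<times> V"]) (auto dest: R_in_V simp: finite_V)

lemma wf_R: "wf R"
  using finite_acyclic_wf[OF finite_R acyclic_R] .

lemma wf_R_converse: "wf (R\<inverse>)"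
  using finite_acyclic_wf_converse[OF finite_R acyclic_R] .

lemma trancl_first_step:
  assumes "(x, y) \<in> R\<^sup>+"
  obtains z where "x \<in> V" "par x = Some z" "(z, y) \<in> R\<^sup>*"
proof -
  obtain z where "(x, z) \<in> R" "(z, y) \<in> R\<^sup>*" using tranclD[OF assms] by blast
  then show ?thesis using that by (simp add: R_iff)
qed

text \<open>Two nodes above a common node are comparable: the paths to the root are unique.\<close>
lemma above_comparable:
  assumes "(x, a) \<in> R\<^sup>*" "(x, b) \<in> R\<^sup>*"
  shows "(a, b) \<in> R\<^sup>* \<or> (b, a) \<in> R\<^sup>*"
proof -
  have "single_valued R" by (rule single_valuedI) (auto simp: R_iff)
  then show ?thesis by (rule single_valued_confluent[OF _ assms])
qed

definition desc :: "'v \<Rightarrow> 'v set" where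
  "desc v = {w. preceq V par w v}"

lemma desc_iff: "w \<in> desc v \<longleftrightarrow> w \<in> V \<and> (w, v) \<in> R\<^sup>*"
  unfolding desc_def preceq_def by simp

lemma desc_subset: "desc v \<subseteq> V"
  by (auto simp: desc_iff)

lemma finite_desc: "finite (desc v)"
  using desc_subset finite_V finite_subset by blast

lemma desc_self: "v \<in> V \<Longrightarrow> v \<in> desc v"
  by (simp add: desc_iff)

lemma desc_mono: "(u, v) \<in> R\<^sup>* \<Longrightarrow> desc u \<subseteq> desc v"
  by (auto simp: desc_iff intro: rtrancl_trans)

lemma not_in_desc_below: "(u, v) \<in> R\<^sup>+ \<Longrightarrow> v \<notin> desc u"
  using not_trancl_refl by (auto simp: desc_iff intro: trancl_rtrancl_trancl)

lemma mom_desc: "mom V par nu v = (\<lambda>i. \<Sum>w\<in>desc v. nu w i)"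
  unfolding mom_def desc_def by simp

lemma root_desc:
  obtains r where "r \<in> V" "desc r = V"
proof -
  obtain r where r: "r \<in> V" "par r = None" "\<And>x. x \<in> V \<Longrightarrow> par x = None \<Longrightarrow> x = r"
    using tree unfolding is_tree_def by blast
  have "x \<in> V \<longrightarrow> (x, r) \<in> R\<^sup>*" for x
  proof (induction x rule: wf_induct[OF wf_R_converse])
    case (1 x)
    show ?case
    proof (cases "par x")
      case None
      then show ?thesis using r(3) by auto
    next
      case (Some y)
      show ?thesis
      proof
        assume "x \<in> V"
        then have xy: "(x, y) \<in> R" using Some by (simp add: R_iff)
        then have "(y, r) \<in> R\<^sup>*" using "1" R_in_V by blast
        with xy show "(x, r) \<in> R\<^sup>*" by (rule converse_rtrancl_into_rtrancl)
      qed
    qed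
  qed
  then have "desc r = V" using desc_subset by (auto simp: desc_iff)
  then show ?thesis using that r(1) by blast
qed

definition gap :: "'v \<Rightarrow> 'v \<Rightarrow> 'v set" where
  "gap v w = desc v - desc w"

lemma gap_subset: "gap v w \<subseteq> V"
  unfolding gap_def using desc_subset by blast

lemma gap_low_end: "w \<in> V \<Longrightarrow> w \<notin> gap v w"
  unfolding gap_def using desc_self by blast

lemma gap_top:
  assumes "(w, v) \<in> R\<^sup>+"
  shows "v \<in> gap v w"
proof -
  have "v \<in> V" using assms by (meson R_in_V rtrancl_in_V tranclD)
  then show ?thesis using not_in_desc_below[OF assms] desc_self by (simp add: gap_def)
qed

lemma gap_parent:
  assumes "x \<in> gap v w" "x \<noteq> v"
  obtains y where "par x = Some y" "y \<in> gap v w"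
proof -
  have x: "x \<in> V" "(x, v) \<in> R\<^sup>*" "x \<notin> desc w"
    using assms(1) by (auto simp: gap_def desc_iff)
  then have "(x, v) \<in> R\<^sup>+" using assms(2) by (metis rtrancl_eq_or_trancl)
  then obtain z where z: "par x = Some z" "(z, v) \<in> R\<^sup>*" using trancl_first_step by blast
  have xz: "(x, z) \<in> R" using x(1) z(1) by (simp add: R_iff)
  have "z \<notin> desc w"
    using x xz by (auto simp: desc_iff intro: converse_rtrancl_into_rtrancl)
  moreover have "z \<in> V" using R_in_V[OF xz] by blast
  ultimately show ?thesis using that z by (auto simp: gap_def desc_iff)
qed

lemma gap_parent_low_end:
  assumes "(w, v) \<in> R\<^sup>+"
  obtains y where "par w = Some y" "y \<in> gap v w"
proof -
  obtain z where z: "w \<in> V" "par w = Some z" "(z, v) \<in> R\<^sup>*" using trancl_first_step[OF assms] by blast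
  have wz: "(w, z) \<in> R" using z by (simp add: R_iff)
  have "z \<notin> desc w"
    using wz not_trancl_refl by (auto simp: desc_iff intro: rtrancl_into_trancl2)
  moreover have "z \<in> V" using R_in_V[OF wz] by blast
  ultimately show ?thesis using that z by (auto simp: gap_def desc_iff)
qed

lemma gap_entering:
  assumes "(w, v) \<in> R\<^sup>+"
  shows "entering V par (gap v w) = {w}"
proof
  obtain y where "par w = Some y" "y \<in> gap v w" using gap_parent_low_end[OF assms] .
  moreover have "w \<in> V" using trancl_first_step[OF assms] by blast
  ultimately show "{w} \<subseteq> entering V par (gap v w)"
    using gap_low_end unfolding entering_def by blast
  show "entering V par (gap v w) \<subseteq> {w}"
  proof
    fix y assume "y \<in> entering V par (gap v w)"
    then obtain u where y: "y \<in> V" "y \<notin> gap v w" "u \<in> gap v w" "par y = Some u"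
      unfolding entering_def by blast
    have u: "u \<in> V" "(u, v) \<in> R\<^sup>*" "u \<notin> desc w"
      using y(3) by (auto simp: gap_def desc_iff)
    have yu: "(y, u) \<in> R" using y by (simp add: R_iff)
    then have "(y, v) \<in> R\<^sup>*" using u(2) by (rule converse_rtrancl_into_rtrancl)
    then have "(y, w) \<in> R\<^sup>*" using y(1,2) by (simp add: gap_def desc_iff)
    then show "y \<in> {w}"
    proof (cases rule: converse_rtranclE)
      case (step z)
      then have "z = u" using yu by (simp add: R_iff)
      then show ?thesis using step u by (simp add: desc_iff)
    qed simp
  qed
qed

lemma gap_exiting:
  assumes "(w, v) \<in> R\<^sup>+" "par v = Some u"
  shows "exiting V par (gap v w) = {v}"
proof
  have vs: "v \<in> gap v w" using gap_top[OF assms(1)] .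
  then have vu: "(v, u) \<in> R" using assms(2) gap_subset by (auto simp: R_iff)
  have "u \<notin> gap v w"
    using vu not_trancl_refl by (auto simp: gap_def desc_iff intro: rtrancl_into_trancl2)
  then show "{v} \<subseteq> exiting V par (gap v w)"
    using vs R_in_V[OF vu] assms(2) unfolding exiting_def by blast
  show "exiting V par (gap v w) \<subseteq> {v}"
  proof
    fix x assume "x \<in> exiting V par (gap v w)"
    then obtain y where x: "x \<in> gap v w" "y \<notin> gap v w" "par x = Some y"
      unfolding exiting_def by blast
    show "x \<in> {v}"
    proof (rule ccontr)
      assume "x \<notin> {v}"
      with x(1) obtain y' where "par x = Some y'" "y' \<in> gap v w" using gap_parent by blast
      then show False using x(2,3) by simp
    qed
  qed
qed

lemma gap_mom:
  assumes "(w, v) \<in> R\<^sup>*"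
  shows "mom V par nu v i = mom V par nu w i + (\<Sum>x\<in>gap v w. nu x i)"
  using sum.subset_diff[OF desc_mono[OF assms] finite_desc, of "\<lambda>x. nu x i"]
  unfolding mom_desc gap_def by (simp add: add.commute)

lemma gap_component:
  assumes wv: "(w, v) \<in> R\<^sup>+"
    and low: "\<forall>x\<in>gap v w - {v}. sc x \<le> n" and "n < sc v" "n < sc w"
  shows "gap v w = component V par sc n v"
proof
  define L where "L = low_lines V par sc n"
  have L_iff: "(a, b) \<in> L \<longleftrightarrow> a \<in> V \<and> par a = Some b \<and> sc a \<le> n" for a b
    unfolding L_def low_lines_def parrel_def by simp
  have "z \<in> gap v w" if "(v, z) \<in> (L \<union> L\<inverse>)\<^sup>*" for z
    using that
  proof (induction rule: rtrancl_induct)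
    case base
    show ?case using gap_top[OF wv] .
  next
    case (step y z)
    from step.hyps(2) show ?case
    proof
      assume yz: "(y, z) \<in> L"
      then have "y \<noteq> v" using L_iff \<open>n < sc v\<close> by auto
      then obtain y' where "par y = Some y'" "y' \<in> gap v w" using gap_parent[OF step.IH] by blast
      then show ?thesis using yz L_iff by auto
    next
      assume "(y, z) \<in> L\<inverse>"
      then have zy: "z \<in> V" "par z = Some y" "sc z \<le> n" using L_iff by auto
      show ?thesis
      proof (rule ccontr)
        assume "z \<notin> gap v w"
        then have "z \<in> entering V par (gap v w)"
          unfolding entering_def using zy step.IH by blast
        then show False using gap_entering[OF wv] zy(3) \<open>n < sc w\<close> by auto
      qed
    qed
  qed
  then show "component V par sc n v \<subseteq> gap v w"
    by (auto simp: component_def L_def)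
  have "(x, v) \<in> L\<^sup>*" if "x \<in> gap v w" for x
  proof -
    have "(x, v) \<in> R\<^sup>*" using that by (simp add: gap_def desc_iff)
    then show ?thesis using that
    proof (induction rule: converse_rtrancl_induct)
      case (step x y)
      show ?case
      proof (cases "x = v")
        case False
        obtain y' where y': "par x = Some y'" "y' \<in> gap v w" using gap_parent[OF step.prems False] .
        have "par x = Some y" "x \<in> V" using step.hyps(1) R_iff by auto
        then have "(x, y) \<in> L" using L_iff low step.prems False by auto
        moreover have "(y, v) \<in> L\<^sup>*" using step.IH y' \<open>par x = Some y\<close> by simp
        ultimately show ?thesis by (rule converse_rtrancl_into_rtrancl)
      qed simp
    qed simp
  qed
  then have "(v, x) \<in> (L\<inverse>)\<^sup>*" if "x \<in> gap v w" for x
    using that by (simp add: rtrancl_converse)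
  then have "(v, x) \<in> (L \<union> L\<inverse>)\<^sup>*" if "x \<in> gap v w" for x
    using that rtrancl_mono[of "L\<inverse>" "L \<union> L\<inverse>"] by blast
  then show "gap v w \<subseteq> component V par sc n v"
    by (auto simp: component_def L_def)
qed

lemma gap_self_energy:
  assumes wv: "(w, v) \<in> R\<^sup>+" and "par v = Some u"
    and eq: "mom V par nu v = mom V par nu w"
    and low: "\<forall>x\<in>gap v w - {v}. sc x < sc v \<and> sc x < sc w"
  shows "self_energy V par nu sc (gap v w)"
proof (cases "gap v w = {v}")
  case True
  have "(\<Sum>x\<in>gap v w. nu x i) = 0" for i
    using gap_mom[OF trancl_into_rtrancl[OF wv], of nu i] eq by simp
  then have "nu v = (\<lambda>_. 0)" using True by auto
  moreover have "v \<in> V" using gap_top[OF wv] gap_subset by blast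
  ultimately show ?thesis
    unfolding self_energy_def using True gap_entering[OF wv] by auto
next
  case False
  define I where "I = gap v w - {v}"
  have "I \<noteq> {}" using False gap_top[OF wv] unfolding I_def by blast
  moreover have "finite I" using gap_subset finite_V finite_subset unfolding I_def by blast
  ultimately have "Max (sc ` I) \<in> sc ` I" by simp
  then obtain x0 where x0: "x0 \<in> I" "sc x0 = Max (sc ` I)" by auto
  have "\<forall>x\<in>I. sc x \<le> sc x0" using x0(2) \<open>finite I\<close> by simp
  moreover have "sc x0 < sc v" "sc x0 < sc w" using low x0(1) unfolding I_def by auto
  ultimately have comp: "gap v w = component V par sc (sc x0) v"
    using gap_component[OF wv] unfolding I_def by blast
  obtain y0 where "par x0 = Some y0" "y0 \<in> gap v w"
    using gap_parent x0(1) unfolding I_def by blast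
  moreover have "v \<in> V" using gap_top[OF wv] gap_subset by blast
  ultimately have "is_cluster V par sc (sc x0) (gap v w)"
    unfolding is_cluster_def using comp x0(1) unfolding I_def by blast
  then show ?thesis
    unfolding self_energy_def using gap_entering[OF wv] gap_exiting[OF wv assms(2)] eq by blast
qed

end

section \<open>Counting high lines in separated trees\<close>

locale separated_tree = rooted_tree V par
  for V :: "'v set" and par :: "'v \<Rightarrow> 'v option" +
  fixes nu :: "'v \<Rightarrow> 'd::finite \<Rightarrow> int" and sc :: "'v \<Rightarrow> int" and k :: int and E :: real
  assumes renorm: "renormalised V par nu sc"
    and E_pos: "E > 0"
    and mom_large: "\<forall>v\<in>V. k \<le> sc v \<longrightarrow> E < real_of_int (norm1 (mom V par nu v))"
    and mom_separated: "\<forall>v\<in>V. \<forall>w\<in>V. k \<le> sc v \<longrightarrow> k \<le> sc w \<longrightarrow> mom V par nu v \<noteq> mom V par nu w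
          \<longrightarrow> E < real_of_int (norm1 (\<lambda>i. mom V par nu v i - mom V par nu w i))"
begin

definition high_children :: "'v \<Rightarrow> 'v set" where
  "high_children v = {b. (b, v) \<in> R\<^sup>+ \<and> k \<le> sc b \<and> (\<forall>u. (b, u) \<in> R\<^sup>+ \<and> (u, v) \<in> R\<^sup>+ \<longrightarrow> sc u < k)}"

definition Nhigh :: "'v \<Rightarrow> nat" where
  "Nhigh v = card {w\<in>desc v. k \<le> sc w}"

definition Ksub :: "'v \<Rightarrow> real" where
  "Ksub v = (\<Sum>w\<in>desc v. real_of_int (norm1 (nu w)))"

definition Kown :: "'v \<Rightarrow> real" where
  "Kown v = (\<Sum>w\<in>desc v - (\<Union>b\<in>high_children v. desc b). real_of_int (norm1 (nu w)))"

lemma high_child_below: "b \<in> high_children v \<Longrightarrow> (b, v) \<in> R\<^sup>+"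
  unfolding high_children_def by blast

lemma high_child_scale: "b \<in> high_children v \<Longrightarrow> k \<le> sc b"
  unfolding high_children_def by blast

lemma high_child_in_V: "b \<in> high_children v \<Longrightarrow> b \<in> V"
  by (erule trancl_first_step[OF high_child_below])

lemma high_child_not_root: "b \<in> high_children v \<Longrightarrow> par b \<noteq> None"
  by (erule trancl_first_step[OF high_child_below]) simp

lemma finite_high_children: "finite (high_children v)"
  using finite_subset[OF _ finite_V] high_child_in_V by blast

lemma below_high_child:
  assumes "k \<le> sc x" "(x, v) \<in> R\<^sup>+"
  obtains b where "b \<in> high_children v" "(x, b) \<in> R\<^sup>*"
proof -
  define S where "S = {u. (x, u) \<in> R\<^sup>* \<and> (u, v) \<in> R\<^sup>+ \<and> k \<le> sc u}"
  have "x \<in> S" unfolding S_def using assms by simp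
  moreover have "wf ((R\<^sup>+)\<inverse>)"
    using wf_trancl[OF wf_R_converse] by (simp add: trancl_converse)
  ultimately obtain b where b: "b \<in> S" and top: "\<And>u. (b, u) \<in> R\<^sup>+ \<Longrightarrow> u \<notin> S"
    using wfE_min by (metis converse_iff)
  have "b \<in> high_children v"
    unfolding high_children_def
  proof (intro CollectI conjI allI impI)
    show "(b, v) \<in> R\<^sup>+" "k \<le> sc b" using b unfolding S_def by auto
    fix u assume u: "(b, u) \<in> R\<^sup>+ \<and> (u, v) \<in> R\<^sup>+"
    have "(x, b) \<in> R\<^sup>*" using b unfolding S_def by simp
    then have "(x, u) \<in> R\<^sup>*" using u by (meson rtrancl_trans trancl_into_rtrancl)
    then show "sc u < k" using top[of u] u unfolding S_def by auto
  qed
  then show ?thesis using that b unfolding S_def by blast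
qed

lemma high_children_disjoint:
  assumes "b \<in> high_children v" "b' \<in> high_children v" "b \<noteq> b'"
  shows "desc b \<inter> desc b' = {}"
proof (rule ccontr)
  assume "desc b \<inter> desc b' \<noteq> {}"
  then obtain x where "(x, b) \<in> R\<^sup>*" "(x, b') \<in> R\<^sup>*" by (auto simp: desc_iff)
  then have "(b, b') \<in> R\<^sup>+ \<or> (b', b) \<in> R\<^sup>+"
    using above_comparable assms(3) by (metis rtrancl_eq_or_trancl)
  moreover have "\<not> (c, c') \<in> R\<^sup>+" if "c \<in> high_children v" "c' \<in> high_children v" for c c'
    using that high_child_below[of c'] high_child_scale[of c'] unfolding high_children_def by force
  ultimately show False using assms(1,2) by blast
qed

lemma high_child_desc:
  assumes "b \<in> high_children v"
  shows "desc b \<subseteq> desc v - {v}"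
  using desc_mono[OF trancl_into_rtrancl] not_in_desc_below high_child_below[OF assms] by blast

lemma high_lines_decomp:
  assumes "v \<in> V"
  shows "{w\<in>desc v. k \<le> sc w}
    = (if k \<le> sc v then {v} else {}) \<union> (\<Union>b\<in>high_children v. {w\<in>desc b. k \<le> sc w})"
proof (intro equalityI subsetI)
  fix w assume w: "w \<in> {w\<in>desc v. k \<le> sc w}"
  show "w \<in> (if k \<le> sc v then {v} else {}) \<union> (\<Union>b\<in>high_children v. {w\<in>desc b. k \<le> sc w})"
  proof (cases "w = v")
    case False
    then have "(w, v) \<in> R\<^sup>+" using w by (auto simp: desc_iff rtrancl_eq_or_trancl)
    then obtain b where "b \<in> high_children v" "(w, b) \<in> R\<^sup>*"
      using below_high_child w by blast
    then show ?thesis using w by (auto simp: desc_iff)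
  qed (use w in simp)
next
  fix w
  assume "w \<in> (if k \<le> sc v then {v} else {}) \<union> (\<Union>b\<in>high_children v. {w\<in>desc b. k \<le> sc w})"
  then show "w \<in> {w\<in>desc v. k \<le> sc w}"
    using desc_self[OF assms] high_child_desc by (auto split: if_splits)
qed

lemma Nhigh_decomp:
  assumes "v \<in> V"
  shows "Nhigh v = (if k \<le> sc v then 1 else 0) + (\<Sum>b\<in>high_children v. Nhigh b)"
proof -
  have "Nhigh v = card (if k \<le> sc v then {v} else {})
      + card (\<Union>b\<in>high_children v. {w\<in>desc b. k \<le> sc w})"
    unfolding Nhigh_def high_lines_decomp[OF assms]
    by (rule card_Un_disjoint) (use high_child_desc finite_high_children finite_desc in auto)
  also have "card (\<Union>b\<in>high_children v. {w\<in>desc b. k \<le> sc w}) = (\<Sum>b\<in>high_children v. Nhigh b)"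
  proof -
    have "\<forall>b\<in>high_children v. \<forall>b'\<in>high_children v. b \<noteq> b'
        \<longrightarrow> {w\<in>desc b. k \<le> sc w} \<inter> {w\<in>desc b'. k \<le> sc w} = {}"
      using high_children_disjoint by blast
    then show ?thesis
      unfolding Nhigh_def by (intro card_UN_disjoint) (simp_all add: finite_high_children finite_desc)
  qed
  finally show ?thesis by simp
qed

lemma Nhigh_high_child:
  assumes "b \<in> high_children v"
  shows "1 \<le> Nhigh b"
proof -
  have "b \<in> {w\<in>desc b. k \<le> sc w}"
    using desc_self[OF high_child_in_V] high_child_scale assms by blast
  moreover have "finite {w\<in>desc b. k \<le> sc w}" by (simp add: finite_desc)
  ultimately have "0 < card {w\<in>desc b. k \<le> sc w}" by (auto simp: card_gt_0_iff)
  then show ?thesis unfolding Nhigh_def by simp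
qed

lemma Ksub_decomp:
  assumes "v \<in> V"
  shows "Ksub v = Kown v + (\<Sum>b\<in>high_children v. Ksub b)"
proof -
  have "(\<Union>b\<in>high_children v. desc b) \<subseteq> desc v" using high_child_desc by blast
  then have "Ksub v = Kown v + (\<Sum>w\<in>(\<Union>b\<in>high_children v. desc b). real_of_int (norm1 (nu w)))"
    unfolding Ksub_def Kown_def using sum.subset_diff finite_desc by blast
  also have "(\<Sum>w\<in>(\<Union>b\<in>high_children v. desc b). real_of_int (norm1 (nu w)))
      = (\<Sum>b\<in>high_children v. Ksub b)"
    unfolding Ksub_def
    by (rule sum.UNION_disjoint) (use finite_high_children finite_desc high_children_disjoint in auto)
  finally show ?thesis .
qed

lemma Kown_nonneg: "0 \<le> Kown v"
  unfolding Kown_def by (intro sum_nonneg) (simp add: norm1_nonneg)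


lemma Ksub_ge_mom: "real_of_int (norm1 (mom V par nu v)) \<le> Ksub v"
  unfolding mom_desc Ksub_def by (rule norm1_sum_le[OF finite_desc])

lemma Kown_high_leaf:
  assumes "v \<in> V" "k \<le> sc v" "high_children v = {}"
  shows "E < Kown v"
proof -
  have "Kown v = Ksub v" using assms(3) unfolding Kown_def Ksub_def by simp
  moreover have "E < real_of_int (norm1 (mom V par nu v))" using mom_large assms(1,2) by blast
  ultimately show ?thesis using Ksub_ge_mom[of v] by linarith
qed

lemma gap_to_single_high_child:
  assumes "high_children v = {w}" "x \<in> gap v w - {v}"
  shows "sc x < k"
proof (rule ccontr)
  assume "\<not> sc x < k"
  then have "k \<le> sc x" by simp
  have x: "x \<in> V" "(x, v) \<in> R\<^sup>+" "x \<notin> desc w"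
    using assms(2) by (auto simp: gap_def desc_iff rtrancl_eq_or_trancl)
  obtain b where "b \<in> high_children v" "(x, b) \<in> R\<^sup>*"
    using below_high_child[OF \<open>k \<le> sc x\<close> x(2)] .
  then show False using x(1,3) assms(1) by (simp add: desc_iff)
qed

text \<open>Renormalisation: a non-root high line and its unique high child carry different momenta,
  since otherwise the gap between them would be a self-energy cluster.\<close>
lemma single_high_child_momentum:
  assumes "v \<in> V" "par v = Some u" "k \<le> sc v" "high_children v = {w}"
  shows "mom V par nu v \<noteq> mom V par nu w"
proof
  assume eq: "mom V par nu v = mom V par nu w"
  have w: "w \<in> high_children v" using assms(4) by simp
  have "\<forall>x\<in>gap v w - {v}. sc x < sc v \<and> sc x < sc w"
    using gap_to_single_high_child[OF assms(4)] assms(3) high_child_scale[OF w] by fastforce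
  then have "self_energy V par nu sc (gap v w)"
    using gap_self_energy[OF high_child_below[OF w] assms(2) eq] by blast
  then show False using renorm unfolding renormalised_def by blast
qed

text \<open>If a non-root high line has exactly one high child w, the modes between them generate
  the nonzero difference of the two momenta, hence weigh more than E.\<close>
lemma Kown_single_high_child:
  assumes "v \<in> V" "par v = Some u" "k \<le> sc v" "high_children v = {w}"
  shows "E < Kown v"
proof -
  have w: "w \<in> high_children v" using assms(4) by simp
  have diff: "(\<lambda>i. mom V par nu v i - mom V par nu w i) = (\<lambda>i. \<Sum>x\<in>gap v w. nu x i)"
    by (rule ext) (simp add: gap_mom[OF trancl_into_rtrancl[OF high_child_below[OF w]]])
  have "E < real_of_int (norm1 (\<lambda>i. mom V par nu v i - mom V par nu w i))"
    using mom_separated assms(1,3) high_child_in_V[OF w] high_child_scale[OF w]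
      single_high_child_momentum[OF assms] by blast
  also have "\<dots> \<le> (\<Sum>x\<in>gap v w. real_of_int (norm1 (nu x)))"
    unfolding diff using gap_subset finite_V by (intro norm1_sum_le) (rule finite_subset)
  also have "\<dots> = Kown v" unfolding Kown_def gap_def using assms(4) by simp
  finally show ?thesis .
qed

lemma Kown_few_high_children:
  assumes "v \<in> V" "par v \<noteq> None" "k \<le> sc v" "card (high_children v) \<le> 1"
  shows "E < Kown v"
proof (cases "high_children v = {}")
  case True
  then show ?thesis using Kown_high_leaf assms(1,3) by blast
next
  case False
  then have "card (high_children v) \<noteq> 0" using finite_high_children by simp
  then have "card (high_children v) = 1" using assms(4) by linarith
  then obtain w where "high_children v = {w}" by (rule card_1_singletonE)
  then show ?thesis using Kown_single_high_child assms(1-3) by blast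
qed

lemma children_estimate:
  assumes "v \<in> V" "\<forall>b\<in>high_children v. Nhigh b = 0 \<or> E * real (Nhigh b) \<le> 2 * Ksub b - E"
  shows "E * real (Nhigh v) + E * real (card (high_children v))
    \<le> E * (if k \<le> sc v then 1 else 0) + 2 * Ksub v - 2 * Kown v"
proof -
  have "E * real (Nhigh v) = E * (if k \<le> sc v then 1 else 0) + (\<Sum>b\<in>high_children v. E * real (Nhigh b))"
    using Nhigh_decomp[OF assms(1)] by (simp add: sum_distrib_left distrib_left)
  also have "(\<Sum>b\<in>high_children v. E * real (Nhigh b)) \<le> (\<Sum>b\<in>high_children v. 2 * Ksub b - E)"
  proof (rule sum_mono)
    fix b assume "b \<in> high_children v"
    then show "E * real (Nhigh b) \<le> 2 * Ksub b - E" using assms(2) Nhigh_high_child by fastforce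
  qed
  also have "\<dots> = 2 * (Ksub v - Kown v) - E * real (card (high_children v))"
    using Ksub_decomp[OF assms(1)] by (simp add: sum_subtractf sum_distrib_left)
  finally show ?thesis by simp
qed

lemma subtree_bound:
  assumes "v \<in> V" "par v \<noteq> None"
  shows "Nhigh v = 0 \<or> E * real (Nhigh v) \<le> 2 * Ksub v - E"
  using assms
proof (induction v rule: wf_induct[OF wf_trancl[OF wf_R]])
  case (1 v)
  have "\<forall>b\<in>high_children v. Nhigh b = 0 \<or> E * real (Nhigh b) \<le> 2 * Ksub b - E"
    using "1.IH" high_child_below high_child_in_V high_child_not_root by blast
  from children_estimate[OF "1.prems"(1) this]
  have est: "E * real (Nhigh v) + E * real (card (high_children v))
      \<le> E * (if k \<le> sc v then 1 else 0) + 2 * Ksub v - 2 * Kown v" .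
  consider (none) "\<not> k \<le> sc v" "high_children v = {}"
    | (few) "k \<le> sc v" "card (high_children v) \<le> 1"
    | (many) "(if k \<le> sc v then 1 else 0) + 1 \<le> card (high_children v)"
    using finite_high_children
    by (cases "k \<le> sc v"; cases "card (high_children v) \<le> 1") (auto simp: Suc_le_eq card_gt_0_iff)
  then show ?case
  proof cases
    case none
    then show ?thesis using Nhigh_decomp[OF "1.prems"(1)] by simp
  next
    case few
    then have "E < Kown v" using Kown_few_high_children "1.prems" by blast
    moreover have "0 \<le> E * real (card (high_children v))" using E_pos by simp
    ultimately show ?thesis using est few(1) by simp
  next
    case many
    then have "(if k \<le> sc v then 1 else 0) + 1 \<le> real (card (high_children v))"
      by (cases "k \<le> sc v") auto
    then have "E * ((if k \<le> sc v then 1 else 0) + 1) \<le> E * real (card (high_children v))"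
      using E_pos by (intro mult_left_mono) auto
    then have "E * (if k \<le> sc v then 1 else 0) + E \<le> E * real (card (high_children v))"
      by (simp add: distrib_left)
    then show ?thesis using est Kown_nonneg[of v] by linarith
  qed
qed

lemma tree_bound:
  assumes "v \<in> V"
  shows "E * real (Nhigh v) \<le> 2 * Ksub v"
proof -
  have "\<forall>b\<in>high_children v. Nhigh b = 0 \<or> E * real (Nhigh b) \<le> 2 * Ksub b - E"
    using subtree_bound high_child_in_V high_child_not_root by blast
  from children_estimate[OF assms this]
  have est: "E * real (Nhigh v) + E * real (card (high_children v))
      \<le> E * (if k \<le> sc v then 1 else 0) + 2 * Ksub v - 2 * Kown v" .
  show ?thesis
  proof (cases "k \<le> sc v \<and> high_children v = {}")
    case True
    then have "E * real (Nhigh v) \<le> E + 2 * Ksub v - 2 * Kown v" using est by simp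
    moreover have "E < Kown v" using Kown_high_leaf[OF assms] True by blast
    ultimately show ?thesis using E_pos by linarith
  next
    case False
    then have "E * (if k \<le> sc v then 1 else 0) \<le> E * real (card (high_children v))"
      using E_pos finite_high_children by (auto simp: Suc_le_eq card_gt_0_iff)
    then show ?thesis using est Kown_nonneg[of v] by linarith
  qed
qed

theorem counting_bound: "E * real (card {v\<in>V. k \<le> sc v}) \<le> 2 * real_of_int (Kmodes V nu)"
proof -
  obtain r where r: "r \<in> V" "desc r = V" by (rule root_desc)
  have "Nhigh r = card {v\<in>V. k \<le> sc v}" unfolding Nhigh_def r(2) ..
  moreover have "Ksub r = real_of_int (Kmodes V nu)" unfolding Ksub_def r(2) Kmodes_def by simp
  ultimately show ?thesis using tree_bound[OF r(1)] by simp
qed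

end

section \<open>The counting lemma\<close>

lemma norm1_gt_at_scale:
  fixes \<omega> :: "'d::finite \<Rightarrow> real"
  assumes "\<nu> \<noteq> (\<lambda>_. 0)" "1 \<le> n \<longrightarrow> \<bar>dotp \<omega> \<nu>\<bar> < alpha \<omega> (mseq \<omega> n - 1)"
  shows "2 powr (real (mseq \<omega> n) - 1) < real_of_int (norm1 \<nu>)"
proof (cases n)
  case 0
  have "2 powr (real (mseq \<omega> 0) - 1) = 1 / 2" by (simp add: powr_minus_divide)
  then show ?thesis using norm1_pos[OF assms(1)] 0 by simp
next
  case (Suc n')
  then have "\<bar>dotp \<omega> \<nu>\<bar> < alpha \<omega> (mseq \<omega> n - 1)" using assms(2) by simp
  then have "2 ^ (mseq \<omega> n - 1) < norm1 \<nu>" by (rule norm1_gt_if_small_divisor[OF assms(1)])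
  then have "real_of_int (2 ^ (mseq \<omega> n - 1)) < real_of_int (norm1 \<nu>)" by (simp only: of_int_less_iff)
  moreover have "2 powr (real (mseq \<omega> n) - 1) = 2 ^ (mseq \<omega> n - 1)"
    using Suc by (simp add: of_nat_diff powr_realpow[symmetric])
  ultimately show ?thesis by simp
qed

lemma separated_at_scale:
  fixes \<omega> :: "'d::finite \<Rightarrow> real"
    and nu :: "'v \<Rightarrow> 'd \<Rightarrow> int"
  assumes "CARD('d) \<ge> 2" "bryuno \<omega>" "cutoff chi"
    and "labelled_tree V par nu sc" "renormalised V par nu sc"
    and "\<forall>v\<in>V. sc v \<ge> 0 \<longrightarrow> Psi chi \<omega> (nat (sc v)) (dotp \<omega> (mom V par nu v)) \<noteq> 0"
  shows "separated_tree V par nu sc (int n) (2 powr (real (mseq \<omega> n) - 1))"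
proof
  define M where "M = mom V par nu"
  have small: "\<bar>dotp \<omega> (M v)\<bar> < alpha \<omega> (mseq \<omega> n - 1) / 2"
    if "v \<in> V" "int n \<le> sc v" "1 \<le> n" for v
    using small_divisor_at_scale[OF assms(1-3), of "n - 1" "nat (sc v)"] assms(6) that
    unfolding M_def by simp
  have nonzero: "M v \<noteq> (\<lambda>_. 0)" if "v \<in> V" "int n \<le> sc v" for v
    using assms(4) that unfolding labelled_tree_def M_def by force
  show "is_tree V par" using assms(4) unfolding labelled_tree_def by blast
  show "renormalised V par nu sc" by (rule assms(5))
  show "2 powr (real (mseq \<omega> n) - 1) > 0" by simp
  show "\<forall>v\<in>V. int n \<le> sc v \<longrightarrow> 2 powr (real (mseq \<omega> n) - 1) < real_of_int (norm1 (mom V par nu v))"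
  proof (intro ballI impI)
    fix v assume v: "v \<in> V" "int n \<le> sc v"
    have "1 \<le> n \<longrightarrow> \<bar>dotp \<omega> (M v)\<bar> < alpha \<omega> (mseq \<omega> n - 1)"
      using small[OF v] by force
    then show "2 powr (real (mseq \<omega> n) - 1) < real_of_int (norm1 (mom V par nu v))"
      using norm1_gt_at_scale nonzero[OF v] unfolding M_def by blast
  qed
  show "\<forall>v\<in>V. \<forall>w\<in>V. int n \<le> sc v \<longrightarrow> int n \<le> sc w \<longrightarrow> mom V par nu v \<noteq> mom V par nu w
      \<longrightarrow> 2 powr (real (mseq \<omega> n) - 1)
        < real_of_int (norm1 (\<lambda>i. mom V par nu v i - mom V par nu w i))"
  proof (intro ballI impI)
    fix v w assume vw: "v \<in> V" "w \<in> V" "int n \<le> sc v" "int n \<le> sc w"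
      and "mom V par nu v \<noteq> mom V par nu w"
    then have "(\<lambda>i. M v i - M w i) \<noteq> (\<lambda>_. 0)" unfolding M_def by (metis eq_iff_diff_eq_0 ext)
    moreover have "1 \<le> n \<longrightarrow> \<bar>dotp \<omega> (\<lambda>i. M v i - M w i)\<bar> < alpha \<omega> (mseq \<omega> n - 1)"
    proof
      assume n: "1 \<le> n"
      show "\<bar>dotp \<omega> (\<lambda>i. M v i - M w i)\<bar> < alpha \<omega> (mseq \<omega> n - 1)"
        using small[OF vw(1,3) n] small[OF vw(2,4) n] unfolding dotp_diff by linarith
    qed
    ultimately show "2 powr (real (mseq \<omega> n) - 1)
        < real_of_int (norm1 (\<lambda>i. mom V par nu v i - mom V par nu w i))"
      using norm1_gt_at_scale unfolding M_def by blast
  qed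
qed

theorem lemma3p4:
  fixes \<omega> :: "'d::finite \<Rightarrow> real"
    and chi :: "real \<Rightarrow> real"
    and V :: "'v set" and par :: "'v \<Rightarrow> 'v option"
    and nu :: "'v \<Rightarrow> 'd \<Rightarrow> int" and sc :: "'v \<Rightarrow> int"
  assumes "CARD('d) \<ge> 2"
    and "bryuno \<omega>"
    and "cutoff chi"
    and "labelled_tree V par nu sc"
    and "renormalised V par nu sc"
    and "\<forall>v\<in>V. sc v \<ge> 0 \<longrightarrow> Psi chi \<omega> (nat (sc v)) (dotp \<omega> (mom V par nu v)) \<noteq> 0"
  shows "\<forall>n::nat. real (Nlines V sc n)
           \<le> 2 powr (- (real (mseq \<omega> n) - 2)) * real_of_int (Kmodes V nu)"
proof
  fix n :: nat
  define E where "E = 2 powr (real (mseq \<omega> n) - 1)"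
  interpret separated_tree V par nu sc "int n" E
    unfolding E_def by (rule separated_at_scale[OF assms])
  have "2 powr (- (real (mseq \<omega> n) - 2)) = 2 powr (1 - (real (mseq \<omega> n) - 1))" by simp
  also have "\<dots> = 2 / E" unfolding E_def by (simp add: powr_diff)
  finally have factor: "2 powr (- (real (mseq \<omega> n) - 2)) = 2 / E" .
  have "real (card {v\<in>V. int n \<le> sc v}) \<le> 2 * real_of_int (Kmodes V nu) / E"
    using counting_bound E_pos by (simp add: field_simps)
  then show "real (Nlines V sc n) \<le> 2 powr (- (real (mseq \<omega> n) - 2)) * real_of_int (Kmodes V nu)"
    unfolding Nlines_def factor by simp
qed

end
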